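(* For integers $m\ge2$ and $p\ge0$, \[ \sum_{t=0}^{m-2}\binom{m-1}{t}a_{m-t,\,p+t}=(m-1)^{m+p-1}. \]
   Context: For integers $m\ge2$ and $p\ge0$, define \[ a_{m,p}:=\sum_{\substack{k_2,\dots,k_m\ge0\\ k_2+\cdots+k_m=p}}\frac{(k_2+\cdots+k_m+m-1)!}{(k_2+1)!\cdots(k_m+1)!} \] (a sum over $(m-1)$-tuples of nonnegative integers $(k_2,\dots,k_m)$). *)

theory Defs
  imports Complex_Main
begin

text \<open>Tuples (k_2,...,k_m) of nonnegative integers with k_2+...+k_m = p,
  represented as functions nat => nat that vanish outside {2..m}.\<close>
definition tuples :: "nat \<Rightarrow> nat \<Rightarrow> (nat \<Rightarrow> nat) set" where
  "tuples m p = {k. (\<forall>i. i \<notin> {2..m} \<longrightarrow> k i = 0) \<and> (\<Sum>i\<in>{2..m}. k i) = p}"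

definition a :: "nat \<Rightarrow> nat \<Rightarrow> real" where
  "a m p = (\<Sum>k\<in>tuples m p.
      fact ((\<Sum>i\<in>{2..m}. k i) + m - 1) / (\<Prod>i\<in>{2..m}. fact (k i + 1)))"

end

theory Submission
  imports Defs "HOL-Computational_Algebra.Formal_Power_Series"
begin

(*
  Write  a m p = (p + m - 1)! * b m p, where
    b m p = sum over tuples (k_2,...,k_m) with k_2+...+k_m = p of  1 / prod (k_i + 1)!.
  Splitting off the last entry of a tuple shows that b (n+1) is the n-fold
  Cauchy power of the sequence 1/(j+1)!, i.e. b (n+1) p is the p-th coefficient of
  (expm1_div_X)^n, where expm1_div_X = (e^x - 1)/x.  Hence
    a (s+1) q = (q+s)! * [x^(q+s)] (e^x - 1)^s.
  On the other hand, expanding e^(n x) = (1 + (e^x - 1))^n binomially and reading off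
  the coefficient of x^N for N >= 1 (where the constant term 1 drops out) gives
    n^N / N! = sum_{t<n} C(n,t) [x^N] (e^x - 1)^(n-t).
  With n = m - 1 and N = p + n, each summand is exactly C(m-1,t) a (m-t) (p+t) / N!.
*)

unbundle fps_syntax

lemma tuples_Suc:
  assumes "m \<ge> 1"
  shows "tuples (Suc m) p = (\<lambda>(j,k). k(Suc m := j)) ` (SIGMA j:{0..p}. tuples m (p-j))"
proof
  have range: "{2..Suc m} = insert (Suc m) {2..m}" using assms by auto
  show "tuples (Suc m) p \<subseteq> (\<lambda>(j,k). k(Suc m := j)) ` (SIGMA j:{0..p}. tuples m (p-j))"
  proof
    fix k assume k: "k \<in> tuples (Suc m) p"
    have total: "k (Suc m) + (\<Sum>i\<in>{2..m}. k i) = p"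
      using k range by (simp add: tuples_def)
    have "(\<Sum>i\<in>{2..m}. (k(Suc m := 0)) i) = (\<Sum>i\<in>{2..m}. k i)"
      by (rule sum.cong) auto
    then have "k(Suc m := 0) \<in> tuples m (p - k (Suc m))"
      using k total unfolding tuples_def by auto
    moreover have "k = (k(Suc m := 0))(Suc m := k (Suc m))" by auto
    moreover have "k (Suc m) \<in> {0..p}" using total by auto
    ultimately show "k \<in> (\<lambda>(j,k). k(Suc m := j)) ` (SIGMA j:{0..p}. tuples m (p-j))"
      by (auto intro!: image_eqI[where x="(k (Suc m), k(Suc m := 0))"])
  qed
  show "(\<lambda>(j,k). k(Suc m := j)) ` (SIGMA j:{0..p}. tuples m (p-j)) \<subseteq> tuples (Suc m) p"
  proof clarify
    fix j k assume j: "j \<in> {0..p}" and k: "k \<in> tuples m (p-j)"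
    have "(\<Sum>i\<in>{2..m}. (k(Suc m := j)) i) = (\<Sum>i\<in>{2..m}. k i)"
      by (rule sum.cong) auto
    then show "k(Suc m := j) \<in> tuples (Suc m) p"
      using j k range unfolding tuples_def by auto
  qed
qed

lemma tuples_Suc_inj:
  "inj_on (\<lambda>(j,k). k(Suc m := j)) (SIGMA j:{0..p}. tuples m (p-j))"
proof (rule inj_onI, clarify)
  fix j k j' k' assume "j \<in> {0..p}" "k \<in> tuples m (p-j)" "j' \<in> {0..p}" "k' \<in> tuples m (p-j')"
    and eq: "k(Suc m := j) = k'(Suc m := j')"
  then have "k (Suc m) = 0" "k' (Suc m) = 0" unfolding tuples_def by auto
  moreover have "j = j'" using fun_cong[OF eq, of "Suc m"] by simp
  moreover have "\<And>i. i \<noteq> Suc m \<Longrightarrow> k i = k' i" using fun_cong[OF eq] by (metis fun_upd_other)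
  ultimately show "j = j' \<and> k = k'" by (metis ext)
qed

lemma tuples_1: "tuples (Suc 0) p = (if p = 0 then {\<lambda>_. 0} else {})"
  unfolding tuples_def by auto

lemma finite_tuples: "m \<ge> 1 \<Longrightarrow> finite (tuples m p)"
proof (induction m arbitrary: p rule: dec_induct)
  case base then show ?case by (simp add: tuples_1)
next
  case (step m) then show ?case by (simp add: tuples_Suc)
qed

text \<open>The sum defining a without its (constant) numerator factorial.\<close>
definition b :: "nat \<Rightarrow> nat \<Rightarrow> real" where
  "b m p = (\<Sum>k\<in>tuples m p. 1 / (\<Prod>i\<in>{2..m}. fact (k i + 1)))"

lemma a_eq_fact_times_b: "a m p = fact (p + m - 1) * b m p"
  unfolding a_def b_def sum_distrib_left
  by (rule sum.cong) (auto simp: tuples_def)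

lemma b_Suc:
  assumes "m \<ge> 1"
  shows "b (Suc m) p = (\<Sum>j=0..p. 1 / fact (j+1) * b m (p - j))"
proof -
  have range: "{2..Suc m} = insert (Suc m) {2..m}" using assms by auto
  have weight: "(\<Prod>i\<in>{2..Suc m}. fact ((k(Suc m := j)) i + 1) :: real)
        = fact (j+1) * (\<Prod>i\<in>{2..m}. fact (k i + 1))" for j k
    unfolding range by (subst prod.insert) (auto intro!: prod.cong)
  have "b (Suc m) p = (\<Sum>x\<in>(SIGMA j:{0..p}. tuples m (p-j)).
           1 / (\<Prod>i\<in>{2..Suc m}. fact (((\<lambda>(j,k). k(Suc m := j)) x) i + 1)))"
    unfolding b_def tuples_Suc[OF assms]
    by (subst sum.reindex[OF tuples_Suc_inj]) (simp add: comp_def)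
  also have "\<dots> = (\<Sum>j=0..p. \<Sum>k\<in>tuples m (p-j).
           1 / (\<Prod>i\<in>{2..Suc m}. fact ((k(Suc m := j)) i + 1)))"
    by (subst sum.Sigma) (auto simp: split_def intro: finite_tuples[OF assms])
  also have "\<dots> = (\<Sum>j=0..p. 1 / fact (j+1) * b m (p - j))"
    unfolding b_def sum_distrib_left weight by simp
  finally show ?thesis .
qed

definition expm1_div_X :: "real fps" where
  "expm1_div_X = Abs_fps (\<lambda>j. 1 / fact (j+1))"

lemma X_times_expm1_div_X: "fps_X * expm1_div_X = fps_exp 1 - 1"
  by (rule fps_ext) (auto simp: expm1_div_X_def fact_reduce)

lemma b_as_coeff: "(expm1_div_X ^ n) $ p = b (Suc n) p"
proof (induction n arbitrary: p)
  case 0 then show ?case by (simp add: b_def tuples_1)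
next
  case (Suc n)
  have "(expm1_div_X ^ Suc n) $ p = (\<Sum>j=0..p. 1 / fact (j+1) * b (Suc n) (p - j))"
    unfolding power_Suc fps_mult_nth Suc by (simp add: expm1_div_X_def)
  also have "\<dots> = b (Suc (Suc n)) p" by (rule b_Suc[symmetric]) simp
  finally show ?case .
qed

lemma a_as_coeff: "a (Suc s) q = fact (q + s) * (((fps_exp 1 - 1) ^ s) $ (q + s))"
proof -
  have "((fps_exp 1 - 1) ^ s) $ (q + s) = (fps_X ^ s * expm1_div_X ^ s) $ (q + s)"
    by (simp add: X_times_expm1_div_X[symmetric] power_mult_distrib)
  also have "\<dots> = b (Suc s) q" by (simp add: fps_X_power_mult_nth b_as_coeff)
  finally show ?thesis by (simp add: a_eq_fact_times_b)
qed

text \<open>Coefficient of x^N (N \<ge> 1) in e^(nx) = (1 + (e^x - 1))^n; the term with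
  (e^x - 1)^0 = 1 contributes nothing.\<close>
lemma exp_power_coeff_binomial:
  fixes n N :: nat
  assumes "n \<ge> 1" and "N \<ge> 1"
  shows "real n ^ N / fact N
           = (\<Sum>t=0..n-1. real (n choose t) * ((fps_exp 1 - 1 :: real fps) ^ (n - t)) $ N)"
proof -
  define E :: "real fps" where "E = fps_exp 1"
  have "fps_exp (real n) = (1 + (E - 1)) ^ n"
    by (simp add: E_def fps_exp_power_mult)
  also have "\<dots> = (\<Sum>t\<le>n. of_nat (n choose t) * (E - 1) ^ (n - t))"
    by (subst binomial_ring) simp
  finally have "fps_exp (real n) $ N = (\<Sum>t\<le>n. of_nat (n choose t) * (E - 1) ^ (n - t)) $ N"
    by simp
  then have "real n ^ N / fact N = (\<Sum>t\<le>n. real (n choose t) * ((E - 1) ^ (n - t)) $ N)"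
    by (simp add: fps_sum_nth fps_of_nat[symmetric] del: fps_of_nat)
  also have "{..n} = insert n {0..n-1}" using assms(1) by auto
  finally show ?thesis
    using assms by (simp add: E_def)
qed

text \<open>With n = m - 1 and N = p + n, each summand equals C(n,t) N! [x^N] (e^x - 1)^(n-t)
  by a_as_coeff, and the binomial identity sums these to n^N.\<close>

theorem proposition3:
  fixes m p :: nat
  assumes "m \<ge> 2"
  shows "(\<Sum>t=0..m-2. real ((m - 1) choose t) * a (m - t) (p + t))
           = real (m - 1) ^ (m + p - 1)"
proof -
  define n where "n = m - 1"
  define N where "N = p + n"
  have n1: "n \<ge> 1" and N1: "N \<ge> 1" and exponent: "m + p - 1 = N"
    using assms by (auto simp: n_def N_def)
  have "(\<Sum>t=0..m-2. real ((m - 1) choose t) * a (m - t) (p + t))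
      = (\<Sum>t=0..n-1. real (n choose t) * (fact N * ((fps_exp 1 - 1) ^ (n - t)) $ N))"
  proof (rule sum.cong)
    fix t assume "t \<in> {0..n-1}"
    then have "m - t = Suc (n - t)" and "p + t + (n - t) = N"
      using n1 by (auto simp: n_def N_def)
    then show "real ((m - 1) choose t) * a (m - t) (p + t)
        = real (n choose t) * (fact N * ((fps_exp 1 - 1) ^ (n - t)) $ N)"
      by (simp add: a_as_coeff n_def)
  qed (simp add: n_def)
  also have "\<dots> = fact N * (\<Sum>t=0..n-1. real (n choose t) * ((fps_exp 1 - 1) ^ (n - t)) $ N)"
    by (simp add: sum_distrib_left mult.left_commute)
  also have "\<dots> = fact N * (real n ^ N / fact N)"
    using exp_power_coeff_binomial[OF n1 N1] by simp
  also have "\<dots> = real (m - 1) ^ (m + p - 1)"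
    using exponent by (simp add: n_def)
  finally show ?thesis .
qed

end
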